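(* In the real plane with Euclidean coordinates $(x,y)$, let $\Gamma$ be a circle, and let $C_1=[1:0:0]$ and $C_2=[\alpha:1:0]$, with $\alpha\ge 0$, be points on the line at infinity (so the line $C_1C_2$ is disjoint from $\Gamma$); let $\mathcal{C}^*$ be the singular dual conic given by $C_1,C_2$. Then the polygonal lines inscribed in $\Gamma$ and circumscribed about $\mathcal{C}^*$ satisfy: (i) there are no such closed polygons with an odd number of sides; (ii) such a polygonal line is closed with $2n$ sides if and only if $$\arctan\left(\frac{1}{\alpha}\right)\in\left\{\frac{k\pi}{n}\ \middle|\ 1\le k<n,\ \gcd(k,n)=1\right\}.$$
   Context: The singular dual conic $\mathcal{C}^*$ given by two distinct points $C_1,C_2$ is the union of the pencils of lines through $C_1$ and through $C_2$; here lines through $C_1$ are the lines parallel to the direction $(1,0)$ and lines through $C_2$ are the lines parallel to the direction $(\alpha,1)$. A polygonal line $A_1A_2\dots$ is inscribed in $\Gamma$ and circumscribed about $\mathcal{C}^*$ if all vertices lie on $\Gamma$ and the sides alternately pass through $C_1$ and $C_2$; it is closed with $N$ sides if $A_{N+1}=A_1$. For $\alpha=0$, $\arctan(1/\alpha)$ is understood as $\pi/2$. *)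

theory Defs
  imports "HOL-Analysis.Analysis"
begin

text \<open>The circle Gamma is
  sphere c r with r > 0. The point C1 = [1:0:0] at infinity corresponds to the
  direction (1,0), the point C2 = [alpha:1:0] to the direction (alpha,1); a line
  passes through such a point at infinity iff it is parallel to that direction.\<close>

definition dirC1 :: "real \<times> real" where
  "dirC1 = (1, 0)"

definition dirC2 :: "real \<Rightarrow> real \<times> real" where
  "dirC2 \<alpha> = (\<alpha>, 1)"

definition line_through_dir :: "real \<times> real \<Rightarrow> real \<times> real \<Rightarrow> real \<times> real \<Rightarrow> bool" where
  "line_through_dir P Q d \<longleftrightarrow> P \<noteq> Q \<and> (\<exists>t::real. Q - P = t *\<^sub>R d)"

text \<open>A polygonal line A_1 A_2 ... (indexed from 1) inscribed in the circle
  sphere c r and circumscribed about the singular dual conic given by C1, C2: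
  all vertices lie on the circle and the sides A_i A_{i+1} alternately pass
  through C1 and C2 (starting with either of them).\<close>
definition inscr_circ :: "real \<times> real \<Rightarrow> real \<Rightarrow> real \<Rightarrow> (nat \<Rightarrow> real \<times> real) \<Rightarrow> bool" where
  "inscr_circ c r \<alpha> A \<longleftrightarrow>
     (\<forall>i\<ge>1. A i \<in> sphere c r) \<and>
     (\<exists>s::nat. s \<le> 1 \<and>
        (\<forall>i\<ge>1. line_through_dir (A i) (A (i+1))
                    (if even (i + s) then dirC2 \<alpha> else dirC1)))"

definition closed_with :: "(nat \<Rightarrow> real \<times> real) \<Rightarrow> nat \<Rightarrow> bool" where
  "closed_with A N \<longleftrightarrow> N \<ge> 1 \<and> A (N + 1) = A 1 \<and> (\<forall>j. 1 \<le> j \<and> j < N \<longrightarrow> A (j + 1) \<noteq> A 1)"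

definition arctan_inv :: "real \<Rightarrow> real" where
  "arctan_inv \<alpha> = (if \<alpha> = 0 then pi / 2 else arctan (1 / \<alpha>))"

end

theory Submission
  imports Defs
begin

(* Identify the plane with the complex numbers, with origin at the centre of the circle.
  If a chord is parallel to the direction cis phi, its second endpoint is obtained from the
  first, z, as - cis (2 phi) * cnj z: the reflection in the diameter perpendicular to the
  chord.  The directions (1, 0) and (alpha, 1) have arguments 0 and theta = arctan (1 / alpha),
  so consecutive vertices are related by two alternating reflections whose composite is the
  rotation by 2 theta or by -2 theta.  Hence every second vertex is obtained from the first by
  a power of that rotation, and the polygonal line closes for the first time after 2n sides
  iff cis (2 theta) is a primitive n-th root of unity, i.e. theta = k pi / n with k coprime
  to n.  An odd number of sides is impossible: as the reflections are involutions, a polygon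
  closing after an odd number of sides would be symmetric about its middle side, which would
  then be degenerate. *)

definition first_return :: "(nat \<Rightarrow> 'a) \<Rightarrow> nat \<Rightarrow> bool" where
  "first_return z N \<longleftrightarrow> 0 < N \<and> z N = z 0 \<and> (\<forall>j. 0 < j \<and> j < N \<longrightarrow> z j \<noteq> z 0)"

lemma first_return_comp_inj:
  assumes "inj g"
  shows "first_return (\<lambda>i. g (z i)) N \<longleftrightarrow> first_return z N"
  using injD[OF assms] by (auto simp: first_return_def)

lemma closed_with_iff_first_return: "closed_with A N \<longleftrightarrow> first_return (\<lambda>i. A (Suc i)) N"
  by (auto simp: closed_with_def first_return_def)

lemma first_return_even_iff_power:
  fixes z :: "nat \<Rightarrow> 'a::idom"
  assumes even_steps: "\<And>k. z (2 * k) = \<rho> ^ k * z 0" and "z 0 \<noteq> 0"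
    and odd_steps: "\<And>k. z (2 * k + 1) \<noteq> z 0"
  shows "first_return z (2 * n) \<longleftrightarrow> first_return (\<lambda>k. \<rho> ^ k) n"
proof -
  have returns_at_even: "z (2 * k) = z 0 \<longleftrightarrow> \<rho> ^ k = 1" for k
    using even_steps[of k] \<open>z 0 \<noteq> 0\<close> by (metis mult_cancel_right2)
  have "(\<forall>j. 0 < j \<and> j < 2 * n \<longrightarrow> z j \<noteq> z 0) \<longleftrightarrow> (\<forall>k. 0 < k \<and> k < n \<longrightarrow> \<rho> ^ k \<noteq> 1)"
  proof safe
    fix k assume "\<forall>j. 0 < j \<and> j < 2 * n \<longrightarrow> z j \<noteq> z 0" "0 < k" "k < n" "\<rho> ^ k = 1"
    then show False
      using returns_at_even[of k] by auto
  next
    fix j assume "\<forall>k. 0 < k \<and> k < n \<longrightarrow> \<rho> ^ k \<noteq> 1" "0 < j" "j < 2 * n" "z j = z 0"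
    then show False
      using returns_at_even[of "j div 2"] odd_steps[of "j div 2"]
      by (cases "even j") (auto elim!: evenE oddE)
  qed
  then show ?thesis
    using returns_at_even[of n] by (auto simp: first_return_def)
qed

lemma alternating_involutions_odd_return:
  assumes involutive: "\<And>b x. f b (f b x) = x"
    and step: "\<And>i. z (Suc i) = f (even i) (z i)"
    and closed: "z (2 * m + 1) = z 0"
  shows "z (Suc m) = z m"
proof -
  have "z p = z (2 * m + 1 - p)" if "p \<le> m" for p
    using that
  proof (induction p)
    case 0
    then show ?case
      using closed by simp
  next
    case (Suc p)
    have "z (2 * m + 1 - p) = f (even p) (z (2 * m - p))"
      using step[of "2 * m - p"] Suc.prems by (simp add: Suc_diff_le)
    then have "f (even p) (z (2 * m + 1 - p)) = z (2 * m + 1 - Suc p)"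
      using involutive by simp
    then show ?case
      using Suc step[of p] by simp
  qed
  from this[of m] show ?thesis
    by simp
qed

definition perp_reflection :: "real \<Rightarrow> complex \<Rightarrow> complex" where
  "perp_reflection \<phi> z = - cis (2 * \<phi>) * cnj z"

lemma perp_reflection_involutive: "perp_reflection \<phi> (perp_reflection \<phi> z) = z"
  by (simp add: perp_reflection_def cis_cnj mult.assoc[symmetric] cis_mult)

lemma horizontal_chord_endpoint:
  assumes "cmod w = cmod z" "w \<noteq> z" "Im w = Im z"
  shows "w = - cnj z"
proof -
  have "(Re w)\<^sup>2 = (Re z)\<^sup>2"
    using assms(1,3) by (simp add: cmod_def)
  moreover have "Re w \<noteq> Re z"
    using assms(2,3) complex_eqI by blast
  ultimately have "Re w = - Re z"
    by (metis power2_eq_iff)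
  then show ?thesis
    using assms(3) by (simp add: complex_eq_iff)
qed

lemma chord_endpoint:
  assumes "cmod w = cmod z" "w \<noteq> z" "w - z = of_real t * cis \<phi>"
  shows "w = perp_reflection \<phi> z"
proof -
  have rotated: "w * cis (- \<phi>) = - cnj (z * cis (- \<phi>))"
  proof (rule horizontal_chord_endpoint)
    show "cmod (w * cis (- \<phi>)) = cmod (z * cis (- \<phi>))"
      using assms(1) by (simp add: norm_mult)
    show "w * cis (- \<phi>) \<noteq> z * cis (- \<phi>)"
      using assms(2) by simp
    have "w * cis (- \<phi>) - z * cis (- \<phi>) = of_real t"
      using assms(3) by (simp add: left_diff_distrib[symmetric] cis_mult)
    then have "Im (w * cis (- \<phi>) - z * cis (- \<phi>)) = 0"
      by simp
    then show "Im (w * cis (- \<phi>)) = Im (z * cis (- \<phi>))"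
      by simp
  qed
  have "w = w * cis (- \<phi>) * cis \<phi>"
    by (simp add: mult.assoc cis_mult)
  also have "\<dots> = - cnj (z * cis (- \<phi>)) * cis \<phi>"
    by (simp only: rotated)
  also have "\<dots> = perp_reflection \<phi> z"
    by (simp add: perp_reflection_def cis_cnj cis_mult mult_ac)
  finally show ?thesis .
qed

lemma alternating_perp_reflections_even_iterate:
  assumes step: "\<And>i. z (Suc i) = perp_reflection (\<phi> (even i)) (z i)"
  shows "z (2 * k) = cis (2 * (\<phi> False - \<phi> True)) ^ k * z 0"
proof (induction k)
  case (Suc k)
  have "z (2 * Suc k) = cis (2 * \<phi> False) * cis (- 2 * \<phi> True) * z (2 * k)"
    using step[of "2 * k"] step[of "Suc (2 * k)"] by (simp add: perp_reflection_def cis_cnj)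
  also have "\<dots> = cis (2 * (\<phi> False - \<phi> True)) * z (2 * k)"
    by (simp add: cis_mult algebra_simps)
  finally show ?case
    using Suc.IH by simp
qed simp

lemma cis_double_power_eq_1_iff: "cis (2 * \<theta>) ^ k = 1 \<longleftrightarrow> real k * \<theta> / pi \<in> \<int>"
proof -
  have "cis (2 * \<theta>) ^ k = 1 \<longleftrightarrow> (\<exists>j::int. real k * (2 * \<theta>) = of_int (2 * j) * pi)"
    unfolding Complex.DeMoivre unfolding cis_conv_exp exp_eq_1 by simp
  also have "\<dots> \<longleftrightarrow> (\<exists>j::int. real k * \<theta> = of_int j * pi)"
    by simp
  also have "\<dots> \<longleftrightarrow> real k * \<theta> / pi \<in> \<int>"
    by (auto simp: Ints_def field_simps)
  finally show ?thesis .
qed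

lemma least_integral_multiple_iff:
  fixes x :: real
  assumes "0 < x" "x < 1"
  shows "(0 < n \<and> real n * x \<in> \<int> \<and> (\<forall>j. 0 < j \<and> j < n \<longrightarrow> real j * x \<notin> \<int>))
    \<longleftrightarrow> (\<exists>k. 1 \<le> k \<and> k < n \<and> gcd k n = 1 \<and> x = real k / real n)"
proof
  assume "0 < n \<and> real n * x \<in> \<int> \<and> (\<forall>j. 0 < j \<and> j < n \<longrightarrow> real j * x \<notin> \<int>)"
  then have "0 < n" and minimal: "\<And>j. 0 < j \<Longrightarrow> j < n \<Longrightarrow> real j * x \<notin> \<int>"
    and "real n * x \<in> \<int>" by auto
  then obtain m :: int where m: "real n * x = of_int m"
    by (auto elim: Ints_cases)
  have "0 < real n * x" "real n * x < real n"
    using assms \<open>0 < n\<close> by auto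
  then have "0 < m" "m < int n"
    using m by linarith+
  define k where "k = nat m"
  have x: "x = real k / real n"
    using m \<open>0 < m\<close> \<open>0 < n\<close> by (simp add: k_def field_simps)
  have "gcd k n = 1"
  proof (rule ccontr)
    assume "gcd k n \<noteq> 1"
    moreover have "0 < gcd k n"
      using \<open>0 < n\<close> by simp
    ultimately have "n div gcd k n < n"
      using \<open>0 < n\<close> div_less_dividend[of "gcd k n" n] by linarith
    moreover have "0 < n div gcd k n"
      using \<open>0 < n\<close> by (simp add: div_greater_zero_iff)
    moreover have "real (n div gcd k n) * x = real (k div gcd k n)"
      using x \<open>0 < gcd k n\<close> \<open>0 < n\<close>
      by (simp add: real_of_nat_div field_simps)
    ultimately show False
      using minimal by (metis Ints_of_nat)
  qed
  moreover have "1 \<le> k" "k < n"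
    using \<open>0 < m\<close> \<open>m < int n\<close> by (simp_all add: k_def)
  ultimately show "\<exists>k. 1 \<le> k \<and> k < n \<and> gcd k n = 1 \<and> x = real k / real n"
    using x by (intro exI[of _ k] conjI)
next
  assume "\<exists>k. 1 \<le> k \<and> k < n \<and> gcd k n = 1 \<and> x = real k / real n"
  then obtain k where k: "1 \<le> k" "k < n" "coprime k n" and x: "x = real k / real n"
    by (auto simp: coprime_iff_gcd_eq_1)
  have "real j * x \<notin> \<int>" if "0 < j" "j < n" for j
  proof
    assume "real j * x \<in> \<int>"
    then obtain m :: int where "real j * x = of_int m"
      by (auto elim: Ints_cases)
    then have "real j * real k = of_int m * real n"
      using x k by (simp add: field_simps)
    then have "of_int (int j * int k) = (of_int (m * int n) :: real)"
      by simp
    then have "int j * int k = m * int n"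
      by (simp only: of_int_eq_iff)
    then have "n dvd j * k"
      by (metis dvd_triv_right int_dvd_int_iff of_nat_mult)
    then have "n dvd j"
      using k(3) by (simp add: coprime_commute coprime_dvd_mult_left_iff)
    then show False
      using that by (simp add: nat_dvd_not_less)
  qed
  then show "0 < n \<and> real n * x \<in> \<int> \<and> (\<forall>j. 0 < j \<and> j < n \<longrightarrow> real j * x \<notin> \<int>)"
    using k x by auto
qed

lemma first_return_cis_double_power_iff:
  assumes "0 < \<bar>\<theta>\<bar>" "\<bar>\<theta>\<bar> < pi"
  shows "first_return (\<lambda>k. cis (2 * \<theta>) ^ k) n
    \<longleftrightarrow> \<bar>\<theta>\<bar> \<in> {real k * pi / real n | k. 1 \<le> k \<and> k < n \<and> gcd k n = 1}"
proof -
  have abs_Ints: "real k * \<theta> / pi \<in> \<int> \<longleftrightarrow> real k * (\<bar>\<theta>\<bar> / pi) \<in> \<int>" for k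
    by (cases "0 \<le> \<theta>") (simp_all add: minus_divide_left[symmetric])
  have "first_return (\<lambda>k. cis (2 * \<theta>) ^ k) n
      \<longleftrightarrow> (\<exists>k. 1 \<le> k \<and> k < n \<and> gcd k n = 1 \<and> \<bar>\<theta>\<bar> / pi = real k / real n)"
    using least_integral_multiple_iff[of "\<bar>\<theta>\<bar> / pi" n] assms
    by (simp add: first_return_def cis_double_power_eq_1_iff abs_Ints)
  also have "\<dots> \<longleftrightarrow> \<bar>\<theta>\<bar> \<in> {real k * pi / real n | k. 1 \<le> k \<and> k < n \<and> gcd k n = 1}"
    by (auto simp: field_simps)
  finally show ?thesis .
qed

lemma alternating_perp_reflections_odd_return:
  assumes step: "\<And>i. w (Suc i) = perp_reflection (\<phi> (even i)) (w i)"
    and moves: "\<And>i. w (Suc i) \<noteq> w i"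
  shows "w (2 * m + 1) \<noteq> w 0"
proof
  assume "w (2 * m + 1) = w 0"
  then have "w (Suc m) = w m"
    by (rule alternating_involutions_odd_return[where f = "\<lambda>b. perp_reflection (\<phi> b)",
          OF perp_reflection_involutive step])
  then show False
    using moves by blast
qed

lemma alternating_perp_reflections_first_return_even:
  assumes step: "\<And>i. w (Suc i) = perp_reflection (\<phi> (even i)) (w i)"
    and moves: "\<And>i. w (Suc i) \<noteq> w i" and "w 0 \<noteq> 0"
    and "0 < \<bar>\<phi> False - \<phi> True\<bar>" "\<bar>\<phi> False - \<phi> True\<bar> < pi"
  shows "first_return w (2 * n)
    \<longleftrightarrow> \<bar>\<phi> False - \<phi> True\<bar> \<in> {real k * pi / real n | k. 1 \<le> k \<and> k < n \<and> gcd k n = 1}"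
proof -
  have "first_return w (2 * n) \<longleftrightarrow> first_return (\<lambda>k. cis (2 * (\<phi> False - \<phi> True)) ^ k) n"
    using alternating_perp_reflections_even_iterate[OF step] \<open>w 0 \<noteq> 0\<close>
      alternating_perp_reflections_odd_return[OF step moves]
    by (rule first_return_even_iff_power)
  also have "\<dots> \<longleftrightarrow> \<bar>\<phi> False - \<phi> True\<bar> \<in> {real k * pi / real n | k. 1 \<le> k \<and> k < n \<and> gcd k n = 1}"
    using assms(4,5) by (rule first_return_cis_double_power_iff)
  finally show ?thesis .
qed

definition complex_of :: "real \<times> real \<Rightarrow> complex" where
  "complex_of p = Complex (fst p) (snd p)"

lemma complex_of_diff: "complex_of (p - q) = complex_of p - complex_of q"
  by (simp add: complex_of_def complex_eq_iff)

lemma complex_of_scaleR: "complex_of (t *\<^sub>R p) = of_real t * complex_of p"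
  by (simp add: complex_of_def complex_eq_iff)

lemma norm_complex_of: "cmod (complex_of p) = norm p"
  by (cases p) (simp add: complex_of_def cmod_def norm_Pair)

lemma inj_complex_of: "inj complex_of"
  by (auto intro!: injI simp: complex_of_def complex_eq_iff prod_eq_iff)

lemma chord_through_direction:
  assumes "P \<in> sphere c r" "Q \<in> sphere c r" "line_through_dir P Q d"
  shows "complex_of (Q - c) = perp_reflection (Arg (complex_of d)) (complex_of (P - c))"
proof -
  obtain t where "P \<noteq> Q" and chord: "Q - P = t *\<^sub>R d"
    using assms(3) by (auto simp: line_through_dir_def)
  have equal_norms: "cmod (complex_of (Q - c)) = cmod (complex_of (P - c))"
    using assms(1,2) by (simp add: norm_complex_of dist_norm norm_minus_commute)
  have distinct: "complex_of (Q - c) \<noteq> complex_of (P - c)"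
    using \<open>P \<noteq> Q\<close> injD[OF inj_complex_of] by fastforce
  have "complex_of (Q - c) - complex_of (P - c) = of_real t * complex_of d"
    by (simp flip: complex_of_diff complex_of_scaleR add: chord)
  also have "\<dots> = of_real (t * cmod (complex_of d)) * cis (Arg (complex_of d))"
    by (subst rcis_cmod_Arg[symmetric]) (simp add: rcis_def)
  finally show ?thesis
    by (rule chord_endpoint[OF equal_norms distinct])
qed

lemma Arg_complex_of_dirC1: "Arg (complex_of dirC1) = 0"
proof -
  have "complex_of dirC1 = 1"
    by (simp add: complex_of_def dirC1_def complex_eq_iff)
  then show ?thesis
    by simp
qed

lemma Arg_complex_of_dirC2:
  assumes "0 \<le> \<alpha>"
  shows "Arg (complex_of (dirC2 \<alpha>)) = arctan_inv \<alpha>"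
proof (cases "\<alpha> = 0")
  case True
  then show ?thesis
    by (simp add: complex_of_def dirC2_def arctan_inv_def Complex_eq)
next
  case False
  then show ?thesis
    using assms by (simp add: complex_of_def dirC2_def arctan_inv_def arg_conv_arctan)
qed

lemma arctan_inv_bounds:
  assumes "0 \<le> \<alpha>"
  shows "0 < arctan_inv \<alpha> \<and> arctan_inv \<alpha> < pi"
proof -
  have "0 < Im (complex_of (dirC2 \<alpha>))"
    by (simp add: complex_of_def dirC2_def)
  then show ?thesis
    using Arg_lt_pi Arg_complex_of_dirC2[OF assms] by metis
qed

lemma inscr_circ_vertex_sequence:
  assumes "inscr_circ c r \<alpha> A" "0 < r" "0 \<le> \<alpha>"
  obtains w :: "nat \<Rightarrow> complex" and \<phi> :: "bool \<Rightarrow> real" where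
    "\<And>N. closed_with A N \<longleftrightarrow> first_return w N"
    "\<And>i. w (Suc i) = perp_reflection (\<phi> (even i)) (w i)"
    "\<And>i. w (Suc i) \<noteq> w i" "w 0 \<noteq> 0"
    "\<bar>\<phi> False - \<phi> True\<bar> = arctan_inv \<alpha>"
proof -
  obtain s where on_circle: "\<forall>i\<ge>1. A i \<in> sphere c r"
    and sides: "\<forall>i\<ge>1. line_through_dir (A i) (A (i + 1)) (if even (i + s) then dirC2 \<alpha> else dirC1)"
    using assms(1) unfolding inscr_circ_def by blast
  define w where "w i = complex_of (A (Suc i) - c)" for i
  \<comment> \<open>\<open>\<phi> (even i)\<close> is the argument of the direction of the side from \<open>A (i + 1)\<close> to \<open>A (i + 2)\<close>.\<close>
  define \<phi> where "\<phi> b = Arg (complex_of (if b = odd s then dirC2 \<alpha> else dirC1))" for b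
  have inj_w: "inj (\<lambda>p. complex_of (p - c))"
    by (auto intro!: injI dest: injD[OF inj_complex_of])
  have "closed_with A N \<longleftrightarrow> first_return w N" for N
    unfolding closed_with_iff_first_return w_def first_return_comp_inj[OF inj_w] ..
  moreover have "w (Suc i) = perp_reflection (\<phi> (even i)) (w i)" for i
  proof -
    let ?d = "if even (Suc i + s) then dirC2 \<alpha> else dirC1"
    have "w (Suc i) = perp_reflection (Arg (complex_of ?d)) (w i)"
      unfolding w_def using on_circle sides[rule_format, of "Suc i"]
      by (intro chord_through_direction) simp_all
    moreover have "Arg (complex_of ?d) = \<phi> (even i)"
      by (simp add: \<phi>_def)
    ultimately show ?thesis
      by simp
  qed
  moreover have "w (Suc i) \<noteq> w i" for i
    using sides[rule_format, of "Suc i"] inj_eq[OF inj_w]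
    by (auto simp: w_def line_through_dir_def)
  moreover have "w 0 \<noteq> 0"
    using on_circle assms(2) by (auto simp: w_def complex_of_def complex_eq_iff prod_eq_iff)
  moreover have "\<bar>\<phi> False - \<phi> True\<bar> = arctan_inv \<alpha>"
    using arctan_inv_bounds[OF assms(3)]
    by (simp add: \<phi>_def Arg_complex_of_dirC1 Arg_complex_of_dirC2[OF assms(3)])
  ultimately show thesis
    using that by blast
qed

theorem proposition3p7:
  fixes c :: "real \<times> real" and r \<alpha> :: real and A :: "nat \<Rightarrow> real \<times> real"
  assumes "r > 0" and "\<alpha> \<ge> 0" and "inscr_circ c r \<alpha> A"
  shows "(\<forall>m::nat. \<not> closed_with A (2 * m + 1)) \<and>
         (\<forall>n::nat. closed_with A (2 * n) \<longleftrightarrow>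
           arctan_inv \<alpha> \<in> {real k * pi / real n | k::nat. 1 \<le> k \<and> k < n \<and> gcd k n = 1})"
proof -
  obtain w \<phi> where closed: "\<And>N. closed_with A N \<longleftrightarrow> first_return w N"
    and step: "\<And>i. w (Suc i) = perp_reflection (\<phi> (even i)) (w i)"
    and moves: "\<And>i. w (Suc i) \<noteq> w i" and "w 0 \<noteq> 0"
    and angle: "\<bar>\<phi> False - \<phi> True\<bar> = arctan_inv \<alpha>"
    using inscr_circ_vertex_sequence[OF assms(3,1,2)] by blast
  have "0 < \<bar>\<phi> False - \<phi> True\<bar>" "\<bar>\<phi> False - \<phi> True\<bar> < pi"
    using arctan_inv_bounds[OF assms(2)] angle by simp_all
  then show ?thesis
    using alternating_perp_reflections_odd_return[OF step moves]
      alternating_perp_reflections_first_return_even[OF step moves \<open>w 0 \<noteq> 0\<close>] angle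
    by (simp add: closed first_return_def)
qed

end
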